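(* Let $G$ be a bipartite graph with bipartition $(X,Y)$ such that $|X|=|Y|=m\ge1$, and suppose there is a numbering $f$ of $G$ with $f(X)=[1,m]$. Then there is a numbering $F$ of $G\times K_2$ such that $F^{-1}([1,2m])=\widetilde X$ for one part $\widetilde X$ of a bipartition $(\widetilde X,\widetilde Y)$ of $G\times K_2$, and $str_F(G\times K_2)=5m+1$.
   Context: $G\times K_2$ denotes the Cartesian product of $G$ with the complete graph $K_2$. For a graph $G$ of order $p$, a numbering is a bijection $f:V(G)\to[1,p]$, where $[a,b]$ is the set of integers from $a$ to $b$; $str_f(G)=\max\{f(u)+f(v): uv\in E(G)\}$. *)

theory Defs
  imports Main
begin

definition simple_graph :: "'a set \<Rightarrow> 'a set set \<Rightarrow> bool" where
  "simple_graph V E \<longleftrightarrow> finite V \<and>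
     (\<forall>e\<in>E. \<exists>u v. e = {u, v} \<and> u \<noteq> v \<and> u \<in> V \<and> v \<in> V)"

definition bipartition :: "'a set \<Rightarrow> 'a set set \<Rightarrow> 'a set \<Rightarrow> 'a set \<Rightarrow> bool" where
  "bipartition V E X Y \<longleftrightarrow> X \<union> Y = V \<and> X \<inter> Y = {} \<and>
     (\<forall>e\<in>E. \<exists>x\<in>X. \<exists>y\<in>Y. e = {x, y})"

definition numbering :: "'a set \<Rightarrow> ('a \<Rightarrow> nat) \<Rightarrow> bool" where
  "numbering V f \<longleftrightarrow> bij_betw f V {1..card V}"

definition strength :: "'a set set \<Rightarrow> ('a \<Rightarrow> nat) \<Rightarrow> nat" where
  "strength E f = Max {f u + f v | u v. {u, v} \<in> E}"

text \<open>Cartesian product G x K_2, the two copies indexed by False/True.\<close>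
definition prodK2_verts :: "'a set \<Rightarrow> ('a \<times> bool) set" where
  "prodK2_verts V = V \<times> (UNIV :: bool set)"

definition prodK2_edges :: "'a set \<Rightarrow> 'a set set \<Rightarrow> ('a \<times> bool) set set" where
  "prodK2_edges V E =
     {{(u, b), (v, b)} | u v b. {u, v} \<in> E} \<union> {{(v, False), (v, True)} | v. v \<in> V}"

end

theory Submission
  imports Defs
begin

text \<open>
  Since f maps X onto [1,m], it maps Y onto [m+1,2m].  The copy False of G keeps f on X and
  gets the reversed labels 5m+1-f on Y; the copy True keeps f on Y and gets 2m+f on X.  Then
  X in copy False and Y in copy True carry [1,2m] and form one side of the natural
  bipartition of G x K2.  Edges of copy False have sum at most 4m, edges of copy True at most
  5m, the rungs over X at most 4m, and every rung over y in Y has sum (5m+1-f y) + f y = 5m+1.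
\<close>

definition prodK2_numbering :: "'a set \<Rightarrow> nat \<Rightarrow> ('a \<Rightarrow> nat) \<Rightarrow> 'a \<times> bool \<Rightarrow> nat" where
  "prodK2_numbering X m f = (\<lambda>(v, b).
     if v \<in> X then (if b then 2*m + f v else f v) else (if b then f v else 5*m + 1 - f v))"

lemma bij_betw_image_second_part:
  fixes f :: "'a \<Rightarrow> nat"
  assumes "bij_betw f (X \<union> Y) {1..2*m}" "X \<inter> Y = {}" "f ` X = {1..m}"
  shows "f ` Y = {m+1..2*m}"
proof -
  have "f ` Y = f ` (X \<union> Y) - f ` X"
    using assms(1,2) inj_on_image_set_diff[of f "X \<union> Y" "X \<union> Y" X]
    by (auto simp: bij_betw_def Un_Diff Diff_triv inf_commute)
  then show ?thesis
    using assms(1,3) by (auto simp: bij_betw_def)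
qed

lemma prodK2_edges_cases:
  assumes "bipartition V E X Y" "e \<in> prodK2_edges V E"
  obtains x y b where "x \<in> X" "y \<in> Y" "e = {(x, b), (y, b)}"
    | w where "w \<in> V" "e = {(w, False), (w, True)}"
proof -
  from assms(2) consider u v b where "{u, v} \<in> E" "e = {(u, b), (v, b)}"
    | w where "w \<in> V" "e = {(w, False), (w, True)}"
    unfolding prodK2_edges_def by blast
  then show ?thesis
  proof cases
    case 1
    then obtain x y where "x \<in> X" "y \<in> Y" "{u, v} = {x, y}"
      using assms(1) by (auto simp: bipartition_def)
    then show ?thesis using 1 that(1)[of x y b] by (auto simp: doubleton_eq_iff)
  qed (rule that(2))
qed

lemma bipartition_prodK2:
  assumes "bipartition V E X Y"
  shows "bipartition (prodK2_verts V) (prodK2_edges V E)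
           (X \<times> {False} \<union> Y \<times> {True}) (Y \<times> {False} \<union> X \<times> {True})"
proof -
  have "\<exists>p\<in>X \<times> {False} \<union> Y \<times> {True}. \<exists>q\<in>Y \<times> {False} \<union> X \<times> {True}. e = {p, q}"
    if "e \<in> prodK2_edges V E" for e
  proof (cases rule: prodK2_edges_cases[OF assms that])
    case (1 x y b)
    then show ?thesis by (cases b) (auto simp: insert_commute)
  next
    case (2 w)
    then have "w \<in> X \<or> w \<in> Y" using assms by (auto simp: bipartition_def)
    then show ?thesis using 2 by (auto simp: insert_commute)
  qed
  then show ?thesis
    using assms by (auto simp: bipartition_def prodK2_verts_def)
qed

lemma image_prodK2_numbering_bool_slice:
  "prodK2_numbering X m f ` (A \<times> {b}) = (\<lambda>v. prodK2_numbering X m f (v, b)) ` A"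
  by force

lemma image_reverse_atLeastAtMost:
  fixes m :: nat
  shows "(\<lambda>k. 5*m + 1 - k) ` {m+1..2*m} = {3*m+1..4*m}"
proof
  show "{3*m+1..4*m} \<subseteq> (\<lambda>k. 5*m + 1 - k) ` {m+1..2*m}"
  proof
    fix k assume "k \<in> {3*m+1..4*m}"
    then show "k \<in> (\<lambda>k. 5*m + 1 - k) ` {m+1..2*m}"
      by (intro image_eqI[of _ _ "5*m + 1 - k"]) auto
  qed
qed auto

lemma bij_betw_prodK2_numbering:
  fixes f :: "'a \<Rightarrow> nat"
  assumes "X \<inter> Y = {}" "finite X" "finite Y" "card X = m" "card Y = m"
    and "f ` X = {1..m}" "f ` Y = {m+1..2*m}"
  shows "bij_betw (prodK2_numbering X m f) ((X \<union> Y) \<times> UNIV) {1..4*m}"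
proof -
  let ?F = "prodK2_numbering X m f"
  have slices: "(X \<union> Y) \<times> UNIV = X \<times> {False} \<union> X \<times> {True} \<union> Y \<times> {False} \<union> Y \<times> {True}"
    by auto
  have "?F ` (X \<times> {False}) = f ` X" "?F ` (X \<times> {True}) = (+) (2*m) ` f ` X"
    unfolding image_prodK2_numbering_bool_slice image_image
    by (auto simp: prodK2_numbering_def intro!: image_cong)
  moreover have "?F ` (Y \<times> {False}) = (\<lambda>k. 5*m + 1 - k) ` f ` Y" "?F ` (Y \<times> {True}) = f ` Y"
    using assms(1) unfolding image_prodK2_numbering_bool_slice image_image
    by (auto simp: prodK2_numbering_def intro!: image_cong)
  ultimately have "?F ` ((X \<union> Y) \<times> UNIV) = {1..m} \<union> {2*m+1..3*m} \<union> {3*m+1..4*m} \<union> {m+1..2*m}"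
    unfolding slices image_Un using assms(6,7) image_reverse_atLeastAtMost[of m] by auto
  also have "\<dots> = {1..4*m}"
    by auto
  finally have image: "?F ` ((X \<union> Y) \<times> UNIV) = {1..4*m}" .
  have "card ((X \<union> Y) \<times> (UNIV :: bool set)) = 4*m"
    using assms(1-5) by (simp add: card_cartesian_product card_Un_disjoint)
  with image assms(2,3) show ?thesis
    by (simp add: bij_betw_def eq_card_imp_inj_on)
qed

lemma prodK2_numbering_preimage_atMost:
  fixes f :: "'a \<Rightarrow> nat"
  assumes "X \<inter> Y = {}" "f ` X = {1..m}" "f ` Y = {m+1..2*m}"
  shows "{w \<in> (X \<union> Y) \<times> UNIV. prodK2_numbering X m f w \<in> {1..2*m}}
           = X \<times> {False} \<union> Y \<times> {True}"
proof -
  have "\<And>x. x \<in> X \<Longrightarrow> f x \<in> {1..m}" "\<And>y. y \<in> Y \<Longrightarrow> f y \<in> {m+1..2*m}"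
    using assms(2,3) by auto
  then show ?thesis
    using assms(1) by (fastforce simp: prodK2_numbering_def)
qed

lemma doubleton_eq_imp_sum_eq:
  fixes g :: "'a \<Rightarrow> 'b::ab_semigroup_add"
  shows "{p, q} = {r, s} \<Longrightarrow> g p + g q = g r + g s"
  by (auto simp: doubleton_eq_iff add.commute)

lemma prodK2_numbering_edge_sum_le:
  fixes f :: "'a \<Rightarrow> nat"
  assumes "bipartition V E X Y" "f ` X = {1..m}" "f ` Y = {m+1..2*m}"
    and "{p, q} \<in> prodK2_edges V E"
  shows "prodK2_numbering X m f p + prodK2_numbering X m f q \<le> 5*m + 1"
proof -
  have V: "V = X \<union> Y" "X \<inter> Y = {}"
    using assms(1) by (auto simp: bipartition_def)
  have X: "\<And>x. x \<in> X \<Longrightarrow> f x \<in> {1..m}" and Y: "\<And>y. y \<in> Y \<Longrightarrow> f y \<in> {m+1..2*m}"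
    using assms(2,3) by auto
  show ?thesis
  proof (cases rule: prodK2_edges_cases[OF assms(1,4)])
    case (1 x y b)
    then show ?thesis
      using X[of x] Y[of y] V(2) doubleton_eq_imp_sum_eq[OF 1(3), of "prodK2_numbering X m f"]
      by (cases b) (auto simp: prodK2_numbering_def)
  next
    case (2 w)
    then show ?thesis
      using X[of w] Y[of w] V doubleton_eq_imp_sum_eq[OF 2(2), of "prodK2_numbering X m f"]
      by (auto simp: prodK2_numbering_def)
  qed
qed

lemma strength_eqI:
  fixes F :: "'a \<Rightarrow> nat"
  assumes "\<And>p q. {p, q} \<in> E \<Longrightarrow> F p + F q \<le> s" and "{u, v} \<in> E" "F u + F v = s"
  shows "strength E F = s"
proof -
  let ?S = "{F p + F q | p q. {p, q} \<in> E}"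
  have "?S \<subseteq> {..s}"
    using assms(1) by blast
  then have "finite ?S"
    using finite_subset by blast
  then show ?thesis
    unfolding strength_def using assms by (intro Max_eqI) auto
qed

theorem mainTheorem14:
  fixes V :: "'a set" and E :: "'a set set" and X Y :: "'a set"
    and f :: "'a \<Rightarrow> nat" and m :: nat
  assumes "simple_graph V E"
    and "bipartition V E X Y"
    and "card X = m" and "card Y = m" and "m \<ge> 1"
    and "numbering V f" and "f ` X = {1..m}"
  shows "\<exists>F Xt Yt. numbering (prodK2_verts V) F
           \<and> bipartition (prodK2_verts V) (prodK2_edges V E) Xt Yt
           \<and> {w \<in> prodK2_verts V. F w \<in> {1..2*m}} = Xt
           \<and> strength (prodK2_edges V E) F = 5*m + 1"
proof -
  let ?F = "prodK2_numbering X m f"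
  have V: "V = X \<union> Y" and disjoint: "X \<inter> Y = {}"
    using assms(2) by (auto simp: bipartition_def)
  have finite: "finite X" "finite Y"
    using assms(1) V by (auto simp: simple_graph_def)
  have "card V = 2*m"
    using V disjoint finite assms(3,4) by (simp add: card_Un_disjoint)
  then have fY: "f ` Y = {m+1..2*m}"
    using assms(6,7) V disjoint bij_betw_image_second_part by (simp add: numbering_def)
  have "numbering (prodK2_verts V) ?F"
    using bij_betw_prodK2_numbering[OF disjoint finite assms(3,4,7) fY] \<open>card V = 2*m\<close> V finite
    by (simp add: numbering_def prodK2_verts_def card_cartesian_product)
  moreover obtain y where "y \<in> Y"
    using assms(4,5) by fastforce
  then have "y \<in> V" "y \<notin> X" "f y \<le> 2*m"
    using V disjoint fY by auto
  then have "strength (prodK2_edges V E) ?F = 5*m + 1"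
    by (intro strength_eqI[where u = "(y, False)" and v = "(y, True)"]
        prodK2_numbering_edge_sum_le[OF assms(2,7) fY])
      (auto simp: prodK2_edges_def prodK2_numbering_def)
  ultimately show ?thesis
    using bipartition_prodK2[OF assms(2)] prodK2_numbering_preimage_atMost[OF disjoint assms(7) fY]
    unfolding prodK2_verts_def V by blast
qed

end
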